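(* Let $g$ be an odd positive integer and $j$ an integer with $0\leqslant j\leqslant (g-1)/2$. Then $\beta_-^{\,j+(g-1)/2}\beta_+^{\,g-1}\zeta_{g-2j-1}$ is congruent modulo $J_g$ to $c\,\gamma^{g-1}$ for some positive rational number $c$.
   Context: In $\mathbb{C}[\alpha,\beta,\gamma]$: $\zeta_i=0$ for $i<0$, $\zeta_0=1$, $\zeta_{k+1}=\alpha\zeta_k+k^2(\beta+(-1)^k8)\zeta_{k-1}+2k(k-1)\gamma\zeta_{k-2}$ for $k\geqslant0$; $J_k=(\zeta_k,\zeta_{k+1},\zeta_{k+2})$; $\beta_\pm=\beta\pm8$. *)

theory Defs
  imports Complex_Main "HOL-Computational_Algebra.Polynomial"
begin

text \<open>The ring C[alpha,beta,gamma] is represented as iterated univariate polynomials: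
  innermost variable alpha, then beta, outermost gamma.\<close>

type_synonym R = "complex poly poly poly"

definition cst :: "complex \<Rightarrow> R" where
  "cst c = [:[:[:c:]:]:]"

definition alpha :: R where "alpha = [:[: monom 1 1 :]:]"
definition beta :: R where "beta = [: monom 1 1 :]"
definition gamma :: R where "gamma = monom 1 1"

definition beta_plus :: R where "beta_plus = beta + 8"
definition beta_minus :: R where "beta_minus = beta - 8"

text \<open>zeta_0 = 1, zeta_i = 0 for i < 0, and for k >= 0
  zeta_(k+1) = alpha zeta_k + k^2 (beta + (-1)^k 8) zeta_(k-1) + 2k(k-1) gamma zeta_(k-2).
  The terms with negative index vanish, giving the first two equations.\<close>

fun zeta :: "nat \<Rightarrow> R" where
  "zeta 0 = 1"
| "zeta (Suc 0) = alpha * zeta 0"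
| "zeta (Suc (Suc 0)) = alpha * zeta 1 + of_nat (1^2) * (beta + (-1)^1 * 8) * zeta 0"
| "zeta (Suc (Suc (Suc k))) =
     alpha * zeta (k + 2)
     + of_nat ((k + 2)^2) * (beta + (-1)^(k + 2) * 8) * zeta (k + 1)
     + of_nat (2 * (k + 2) * (k + 1)) * gamma * zeta k"

definition congJ :: "nat \<Rightarrow> R \<Rightarrow> R \<Rightarrow> bool" where
  "congJ k p q \<longleftrightarrow>
     (\<exists>a b c. p - q = a * zeta k + b * zeta (k + 1) + c * zeta (k + 2))"

end

theory Submission
  imports Defs
begin

text \<open>Put \<open>E\<^sub>T\<^sub>,\<^sub>n = \<beta>\<^sub>-\<^bsup>T-\<lceil>n/2\<rceil>\<^esup> \<beta>\<^sub>+\<^bsup>T-\<lfloor>n/2\<rfloor>\<^esup> \<gamma>\<^bsup>g-1-T\<^esup> \<zeta>\<^sub>n\<close> for \<open>T \<le> g - 1\<close> and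
  \<open>n \<le> T + 1\<close>; so \<open>E\<^sub>0\<^sub>,\<^sub>0 = \<gamma>\<^bsup>g-1\<^esup>\<close>, and for \<open>T = g - 1\<close>, \<open>n = g - 1 - 2j\<close> it is the
  element of the theorem up to the factor \<open>\<beta>\<^sub>+\<^bsup>(g-1)/2-j\<^esup>\<close>. Multiplying the recurrence for
  \<open>\<zeta>\<^sub>n\<^sub>+\<^sub>2\<close> by a suitable monomial gives
  \<open>(n+1)\<^sup>2 E\<^sub>T\<^sub>,\<^sub>n = H - \<alpha> E\<^sub>T\<^sub>,\<^sub>n\<^sub>+\<^sub>1 - 2n(n+1) E\<^sub>T\<^sub>-\<^sub>1\<^sub>,\<^sub>n\<^sub>-\<^sub>1\<close>, where the head term \<open>H\<close> is
  \<open>\<beta>\<^sub>\<plusminus> E\<^sub>T\<^sub>,\<^sub>n\<^sub>+\<^sub>2\<close>, or lies in \<open>J\<^sub>g\<close> once \<open>n + 2 > T\<close>, because \<open>\<gamma>\<^sup>m \<zeta>\<^sub>k \<in> J\<^sub>g\<close> for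
  \<open>g - m \<le> k \<le> g + 2\<close>. In particular \<open>\<alpha> \<gamma>\<^bsup>g-1\<^esup>\<close> and \<open>\<beta>\<^sub>- \<gamma>\<^bsup>g-1\<^esup>\<close> lie in \<open>J\<^sub>g\<close>, so \<open>\<beta>\<^sub>+\<close>
  acts as multiplication by 16 on multiples of \<open>\<gamma>\<^bsup>g-1\<^esup>\<close>. Induction on \<open>T\<close> and downwards
  on \<open>n\<close> then shows \<open>\<alpha> E\<^sub>T\<^sub>,\<^sub>n \<in> J\<^sub>g\<close>, and, for \<open>T + n\<close> even, \<open>E\<^sub>T\<^sub>,\<^sub>n \<equiv> c \<gamma>\<^bsup>g-1\<^esup>\<close>
  with a rational \<open>c\<close> of sign \<open>(-1)\<^sup>T\<close>: the head and the \<open>E\<^sub>T\<^sub>-\<^sub>1\<^sub>,\<^sub>n\<^sub>-\<^sub>1\<close> term contribute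
  to \<open>c\<close> with this same sign, so they never cancel.\<close>

lemma cst_add: "cst (a + b) = cst a + cst b"
  by (simp add: cst_def)

lemma cst_mult: "cst (a * b) = cst a * cst b"
  by (simp add: cst_def)

lemma cst_0 [simp]: "cst 0 = 0"
  by (simp add: cst_def)

lemma cst_1 [simp]: "cst 1 = 1"
  by (simp add: cst_def one_pCons)

lemma cst_uminus: "cst (- a) = - cst a"
  by (simp add: cst_def)

lemma cst_of_nat: "cst (of_nat n) = of_nat n"
  by (induction n) (simp_all add: cst_add)

lemma cst_numeral: "cst (numeral k) = numeral k"
  using cst_of_nat[of "numeral k"] by simp

lemma cst_of_rat_divide:
  assumes "K \<noteq> 0"
  shows "of_nat K * cst (of_rat (q / of_nat K)) = cst (of_rat q)"
proof -
  have "of_nat K * (of_rat (q / of_nat K) :: complex) = of_rat q"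
    using assms by (simp add: of_rat_divide)
  then show ?thesis
    by (metis cst_mult cst_of_nat)
qed

definition J :: "nat \<Rightarrow> R set" where
  "J k = {a * zeta k + b * zeta (k + 1) + c * zeta (k + 2) | a b c. True}"

lemma congJ_iff: "congJ k p q \<longleftrightarrow> p - q \<in> J k"
  by (auto simp: congJ_def J_def)

lemma J_add:
  assumes "x \<in> J k" "y \<in> J k"
  shows "x + y \<in> J k"
proof -
  obtain a b c a' b' c' where
    "x = a * zeta k + b * zeta (k + 1) + c * zeta (k + 2)"
    "y = a' * zeta k + b' * zeta (k + 1) + c' * zeta (k + 2)"
    using assms by (auto simp: J_def)
  then have "x + y = (a + a') * zeta k + (b + b') * zeta (k + 1) + (c + c') * zeta (k + 2)"
    by (simp add: algebra_simps)
  then show ?thesis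
    by (auto simp: J_def)
qed

lemma J_mult:
  assumes "x \<in> J k"
  shows "r * x \<in> J k"
proof -
  obtain a b c where "x = a * zeta k + b * zeta (k + 1) + c * zeta (k + 2)"
    using assms by (auto simp: J_def)
  then have "r * x = (r * a) * zeta k + (r * b) * zeta (k + 1) + (r * c) * zeta (k + 2)"
    by (simp add: algebra_simps)
  then show ?thesis
    by (auto simp: J_def)
qed

lemma J_diff: "x \<in> J k \<Longrightarrow> y \<in> J k \<Longrightarrow> x - y \<in> J k"
  using J_add[of x k "(-1) * y"] J_mult[of y k "-1"] by simp

lemma zeta_in_J:
  assumes "k \<le> n" "n \<le> k + 2"
  shows "zeta n \<in> J k"
proof -
  consider "n = k" | "n = k + 1" | "n = k + 2"
    using assms by linarith
  then show ?thesis
  proof cases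
    case 1
    then have "zeta n = 1 * zeta k + 0 * zeta (k + 1) + 0 * zeta (k + 2)" by simp
    then show ?thesis unfolding J_def by blast
  next
    case 2
    then have "zeta n = 0 * zeta k + 1 * zeta (k + 1) + 0 * zeta (k + 2)" by simp
    then show ?thesis unfolding J_def by blast
  next
    case 3
    then have "zeta n = 0 * zeta k + 0 * zeta (k + 1) + 1 * zeta (k + 2)" by simp
    then show ?thesis unfolding J_def by blast
  qed
qed

lemma J_zero [simp]: "0 \<in> J k"
  using J_mult[OF zeta_in_J[of k k], of 0] by simp

lemma J_cancel:
  assumes "of_nat K * x \<in> J k" "K \<noteq> 0"
  shows "x \<in> J k"
proof -
  have "cst (1 / of_nat K) * of_nat K = cst (1 / of_nat K * of_nat K)"
    by (simp only: cst_mult cst_of_nat)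
  then have "cst (1 / of_nat K) * of_nat K = 1"
    using assms(2) by simp
  then have "x = cst (1 / of_nat K) * (of_nat K * x)"
    by (simp add: mult.assoc[symmetric])
  then show ?thesis
    using J_mult[OF assms(1)] by metis
qed

lemma congJ_add: "congJ k x a \<Longrightarrow> congJ k y b \<Longrightarrow> congJ k (x + y) (a + b)"
  unfolding congJ_iff using J_add[of "x - a" k "y - b"] by (simp add: algebra_simps)

lemma congJ_diff: "congJ k x a \<Longrightarrow> congJ k y b \<Longrightarrow> congJ k (x - y) (a - b)"
  unfolding congJ_iff using J_diff[of "x - a" k "y - b"] by (simp add: algebra_simps)

lemma congJ_mult: "congJ k x a \<Longrightarrow> congJ k (r * x) (r * a)"
  unfolding congJ_iff using J_mult[of "x - a" k r] by (simp add: algebra_simps)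

lemma congJ_cancel: "congJ k (of_nat K * x) (of_nat K * a) \<Longrightarrow> K \<noteq> 0 \<Longrightarrow> congJ k x a"
  unfolding congJ_iff using J_cancel[of K "x - a" k] by (simp add: algebra_simps)

lemma congJ_zero_of_in_J: "x \<in> J k \<Longrightarrow> congJ k x (cst (of_rat 0) * y)"
  by (simp add: congJ_iff)

text \<open>\<open>beta_pm n = \<beta> + (-1)^(n+1) 8\<close> is the coefficient of \<open>\<zeta>\<^sub>n\<close> in the
  recurrence for \<open>\<zeta>\<^sub>n\<^sub>+\<^sub>2\<close>.\<close>

definition beta_pm :: "nat \<Rightarrow> R" where
  "beta_pm n = (if even n then beta_minus else beta_plus)"

lemma zeta_Suc_Suc:
  "zeta (n + 2) = alpha * zeta (n + 1) + of_nat ((n + 1)^2) * beta_pm n * zeta n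
     + of_nat (2 * (n + 1) * n) * gamma * zeta (n - 1)"
proof (cases n)
  case 0
  then show ?thesis
    by (simp add: beta_pm_def beta_minus_def numeral_2_eq_2)
next
  case (Suc k)
  have "beta + (-1) ^ (k + 2) * 8 = beta_pm (Suc k)"
    by (cases "even k") (simp_all add: beta_pm_def beta_minus_def beta_plus_def)
  moreover have "n + 2 = Suc (Suc (Suc k))"
    using Suc by simp
  ultimately show ?thesis
    using Suc by (simp add: algebra_simps)
qed

lemma gamma_pow_zeta_in_J:
  assumes "m \<le> g" "g - m \<le> n" "n \<le> g + 2"
  shows "gamma ^ m * zeta n \<in> J g"
  using assms
proof (induction m arbitrary: n)
  case 0
  then show ?case
    by (simp add: zeta_in_J)
next
  case (Suc m)
  show ?case
  proof (cases "g - m \<le> n")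
    case True
    then have "gamma * (gamma ^ m * zeta n) \<in> J g"
      using Suc by (intro J_mult Suc.IH) auto
    then show ?thesis
      by (simp add: mult.assoc)
  next
    case False
    then have n: "n + 1 = g - m"
      using Suc.prems by linarith
    have in_J: "gamma ^ m * zeta (n + i) \<in> J g" if "1 \<le> i" "i \<le> 3" for i
      using Suc.prems n that by (intro Suc.IH) linarith+
    have rec: "zeta (n + 3) = alpha * zeta (n + 2) + of_nat ((n + 2)^2) * beta_pm (n + 1) * zeta (n + 1)
        + of_nat (2 * (n + 2) * (n + 1)) * gamma * zeta n"
      using zeta_Suc_Suc[of "n + 1"] by (simp add: numeral_3_eq_3 numeral_2_eq_2 del: zeta.simps)
    text \<open>The recurrence for \<open>\<zeta>\<^sub>n\<^sub>+\<^sub>3\<close> expresses \<open>\<gamma> \<zeta>\<^sub>n\<close> through \<open>\<zeta>\<^sub>n\<^sub>+\<^sub>1, \<zeta>\<^sub>n\<^sub>+\<^sub>2, \<zeta>\<^sub>n\<^sub>+\<^sub>3\<close>.\<close>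
    have "of_nat (2 * (n + 2) * (n + 1)) * (gamma ^ Suc m * zeta n) =
        gamma ^ m * zeta (n + 3) - alpha * (gamma ^ m * zeta (n + 2))
        - of_nat ((n + 2)^2) * beta_pm (n + 1) * (gamma ^ m * zeta (n + 1))"
      unfolding rec by (simp add: algebra_simps del: zeta.simps)
    also have "\<dots> \<in> J g"
      using in_J[of 3] J_mult[OF in_J[of 2]] J_mult[OF in_J[of 1]] by (simp add: J_diff)
    finally show ?thesis
      by (rule J_cancel) simp
  qed
qed

lemma alpha_gamma_in_J: "alpha * gamma ^ (g - 1) \<in> J g"
  using gamma_pow_zeta_in_J[of "g - 1" g 1] by (simp add: mult.commute)

lemma beta_minus_gamma_in_J: "beta_minus * gamma ^ (g - 1) \<in> J g"
proof -
  have "beta_minus * gamma ^ (g - 1) = gamma ^ (g - 1) * zeta 2 - alpha * (gamma ^ (g - 1) * zeta 1)"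
    by (simp add: numeral_2_eq_2 beta_minus_def algebra_simps)
  also have "\<dots> \<in> J g"
    by (intro J_diff J_mult gamma_pow_zeta_in_J) auto
  finally show ?thesis .
qed

lemma congJ_gamma_beta_minus:
  assumes "congJ g x (cst c * gamma ^ (g - 1))"
  shows "beta_minus * x \<in> J g"
proof -
  have "beta_minus * x = beta_minus * (x - cst c * gamma ^ (g - 1)) + cst c * (beta_minus * gamma ^ (g - 1))"
    by (simp add: algebra_simps)
  also have "\<dots> \<in> J g"
    using assms beta_minus_gamma_in_J[of g] unfolding congJ_iff by (blast intro: J_add J_mult)
  finally show ?thesis .
qed

lemma congJ_gamma_beta_plus:
  assumes "congJ g x (cst c * gamma ^ (g - 1))"
  shows "congJ g (beta_plus * x) (cst (16 * c) * gamma ^ (g - 1))"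
proof -
  have "beta_plus * x - cst (16 * c) * gamma ^ (g - 1)
      = beta_plus * (x - cst c * gamma ^ (g - 1)) + cst c * (beta_minus * gamma ^ (g - 1))"
    by (simp add: cst_mult cst_numeral beta_plus_def beta_minus_def algebra_simps)
  also have "\<dots> \<in> J g"
    using assms beta_minus_gamma_in_J[of g] unfolding congJ_iff by (blast intro: J_add J_mult)
  finally show ?thesis
    unfolding congJ_iff .
qed

lemma congJ_gamma_beta_plus_power:
  assumes "congJ g x (cst c * gamma ^ (g - 1))"
  shows "congJ g (beta_plus ^ k * x) (cst (16 ^ k * c) * gamma ^ (g - 1))"
proof (induction k)
  case 0
  then show ?case
    using assms by simp
next
  case (Suc k)
  then show ?case
    using congJ_gamma_beta_plus[OF Suc] by (simp add: mult.assoc)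
qed

definition weight :: "nat \<Rightarrow> nat \<Rightarrow> R" where
  "weight T n = beta_minus ^ (T - (n + 1) div 2) * beta_plus ^ (T - n div 2)"

definition E :: "nat \<Rightarrow> nat \<Rightarrow> nat \<Rightarrow> R" where
  "E g T n = weight T n * gamma ^ (g - 1 - T) * zeta n"

lemma weight_step:
  assumes "n < 2 * T"
  shows "weight T n = beta_pm n * weight T (n + 1)"
proof (cases "even n")
  case True
  then obtain s where "n = 2 * s"
    by blast
  moreover from this assms have "T - s = Suc (T - (s + 1))"
    by linarith
  ultimately show ?thesis
    using True by (simp add: weight_def beta_pm_def)
next
  case False
  then obtain s where "n = 2 * s + 1"
    by (blast elim: oddE)
  moreover from this assms have "T - s = Suc (T - (s + 1))"
    by linarith
  ultimately show ?thesis
    using False by (simp add: weight_def beta_pm_def)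
qed

lemma weight_shift:
  assumes "1 \<le> n"
  shows "weight (T - 1) (n - 1) = weight T (n + 1)"
proof -
  obtain m where "n = Suc m"
    using assms by (cases n) auto
  then show ?thesis
    by (simp add: weight_def)
qed

definition E_head :: "nat \<Rightarrow> nat \<Rightarrow> nat \<Rightarrow> R" where
  "E_head g T n = weight T (n + 1) * gamma ^ (g - 1 - T) * zeta (n + 2)"

lemma E_recurrence:
  assumes "1 \<le> T" "T \<le> g - 1" "n < 2 * T"
  shows "of_nat ((n + 1)^2) * E g T n
    = E_head g T n - alpha * E g T (n + 1) - of_nat (2 * (n + 1) * n) * E g (T - 1) (n - 1)"
proof -
  define w where "w = weight T (n + 1)"
  define G where "G = gamma ^ (g - 1 - T)"
  have E_n: "E g T n = beta_pm n * w * G * zeta n"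
    using weight_step[OF assms(3)] by (simp add: E_def w_def G_def)
  have E_prev: "of_nat (2 * (n + 1) * n) * E g (T - 1) (n - 1)
      = of_nat (2 * (n + 1) * n) * (w * (gamma * G) * zeta (n - 1))"
  proof (cases "n = 0")
    case False
    then have "weight (T - 1) (n - 1) = w"
      unfolding w_def by (intro weight_shift) simp
    moreover have "g - 1 - (T - 1) = Suc (g - 1 - T)"
      using assms by linarith
    then have "gamma ^ (g - 1 - (T - 1)) = gamma * G"
      by (simp only: G_def power_Suc)
    ultimately show ?thesis
      by (simp only: E_def)
  qed simp
  show ?thesis
    unfolding E_head_def E_n E_prev E_def[of g T "n + 1"] zeta_Suc_Suc[of n]
    by (simp add: w_def G_def algebra_simps del: zeta.simps)
qed

lemma E_head_shift: "n + 2 \<le> T \<Longrightarrow> E_head g T n = beta_pm (n + 1) * E g T (n + 2)"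
  using weight_step[of "n + 1" T] by (simp add: E_head_def E_def mult.assoc)

lemma weighted_zeta_in_J:
  assumes "T \<le> g - 1" "T + 1 \<le> k" "k \<le> T + 2"
  shows "r * gamma ^ (g - 1 - T) * zeta k \<in> J g"
  unfolding mult.assoc using assms by (intro J_mult gamma_pow_zeta_in_J) linarith+

lemma E_head_in_J: "T \<le> g - 1 \<Longrightarrow> T \<le> n + 1 \<Longrightarrow> n \<le> T \<Longrightarrow> E_head g T n \<in> J g"
  unfolding E_head_def by (rule weighted_zeta_in_J) auto

lemma E_top_in_J: "T \<le> g - 1 \<Longrightarrow> E g T (T + 1) \<in> J g"
  unfolding E_def by (rule weighted_zeta_in_J) auto

lemma alpha_E_in_J:
  assumes "T \<le> g - 1" "n \<le> T + 1"
  shows "alpha * E g T n \<in> J g"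
  using assms
proof (induction "3 * T + 1 - n" arbitrary: T n rule: less_induct)
  \<comment> \<open>the measure decreases from \<open>(T, n)\<close> to \<open>(T, n + 1)\<close>, \<open>(T, n + 2)\<close> and \<open>(T - 1, n - 1)\<close>\<close>
  case less
  have IH: "alpha * E g T' n' \<in> J g"
    if "3 * T' + 1 - n' < 3 * T + 1 - n" "T' \<le> g - 1" "n' \<le> T' + 1" for T' n'
    using less.hyps that .
  consider "n = T + 1" | "T = 0" "n = 0" | "1 \<le> T" "n \<le> T"
    using less.prems by linarith
  then show ?case
  proof cases
    case 1
    then show ?thesis
      using E_top_in_J less.prems by (simp add: J_mult)
  next
    case 2
    then show ?thesis
      using alpha_gamma_in_J by (simp add: E_def weight_def)
  next
    case 3
    have head: "alpha * E_head g T n \<in> J g"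
    proof (cases "n + 2 \<le> T")
      case True
      then have "alpha * E_head g T n = beta_pm (n + 1) * (alpha * E g T (n + 2))"
        by (simp add: E_head_shift mult.left_commute)
      also have "\<dots> \<in> J g"
        using True less.prems by (intro J_mult[of "alpha * _"] IH) auto
      finally show ?thesis .
    qed (use E_head_in_J less.prems 3 J_mult in auto)
    have rec: "of_nat ((n + 1)^2) * E g T n
        = E_head g T n - alpha * E g T (n + 1) - of_nat (2 * (n + 1) * n) * E g (T - 1) (n - 1)"
      using 3 less.prems by (intro E_recurrence) auto
    have "of_nat ((n + 1)^2) * (alpha * E g T n) = alpha * E_head g T n
        - alpha * (alpha * E g T (n + 1)) - of_nat (2 * (n + 1) * n) * (alpha * E g (T - 1) (n - 1))"
      unfolding mult.left_commute[of "of_nat ((n + 1)^2)" alpha] rec by (simp add: algebra_simps)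
    also have "\<dots> \<in> J g"
      using head 3 less.prems
      by (intro J_diff J_mult[of "alpha * _"] IH) auto
    finally show ?thesis
      by (rule J_cancel) simp
  qed
qed

lemma E_head_congruent:
  assumes "T \<le> g - 1" "n \<le> T"
    and IH: "n + 2 \<le> T \<Longrightarrow>
      \<exists>c. 0 < (-1)^T * c \<and> congJ g (E g T (n + 2)) (cst (of_rat c) * gamma ^ (g - 1))"
  obtains c where "0 \<le> (-1)^T * c" "n + 2 \<le> T \<Longrightarrow> even n \<Longrightarrow> 0 < (-1)^T * c"
    "congJ g (E_head g T n) (cst (of_rat c) * gamma ^ (g - 1))"
proof (cases "n + 2 \<le> T")
  case True
  then obtain c where c: "0 < (-1)^T * c" "congJ g (E g T (n + 2)) (cst (of_rat c) * gamma ^ (g - 1))"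
    using IH by blast
  show thesis
  proof (cases "even n")
    case True
    have "E_head g T n = beta_plus * E g T (n + 2)"
      using \<open>n + 2 \<le> T\<close> True by (simp add: E_head_shift beta_pm_def)
    moreover have "cst (of_rat (16 * c)) = cst (16 * of_rat c)"
      by (simp add: of_rat_mult)
    ultimately have "congJ g (E_head g T n) (cst (of_rat (16 * c)) * gamma ^ (g - 1))"
      using congJ_gamma_beta_plus[OF c(2)] by simp
    moreover have "0 < (-1)^T * (16 * c)"
      using c(1) by (simp add: mult.left_commute[of _ 16])
    ultimately show thesis
      by (intro that[of "16 * c"] less_imp_le)
  next
    case False
    have "E_head g T n = beta_minus * E g T (n + 2)"
      using \<open>n + 2 \<le> T\<close> False by (simp add: E_head_shift beta_pm_def)
    then have "E_head g T n \<in> J g"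
      using congJ_gamma_beta_minus[OF c(2)] by simp
    then show thesis
      using False by (intro that[of 0] congJ_zero_of_in_J) simp_all
  qed
next
  case False
  then have "E_head g T n \<in> J g"
    using assms by (intro E_head_in_J) auto
  then show thesis
    using False by (intro that[of 0] congJ_zero_of_in_J) simp_all
qed

lemma E_tail_congruent:
  assumes "1 \<le> T"
    and IH: "1 \<le> n \<Longrightarrow>
      \<exists>c. 0 < (-1)^(T - 1) * c \<and> congJ g (E g (T - 1) (n - 1)) (cst (of_rat c) * gamma ^ (g - 1))"
  obtains d where "0 \<le> (-1)^T * d" "1 \<le> n \<Longrightarrow> 0 < (-1)^T * d"
    "congJ g (- (of_nat (2 * (n + 1) * n) * E g (T - 1) (n - 1))) (cst (of_rat d) * gamma ^ (g - 1))"
proof (cases "n = 0")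
  case True
  then show thesis
    by (intro that[of 0]) (simp_all add: congJ_iff)
next
  case False
  define L where "L = 2 * (n + 1) * n"
  obtain c where c: "0 < (-1)^(T - 1) * c"
    "congJ g (E g (T - 1) (n - 1)) (cst (of_rat c) * gamma ^ (g - 1))"
    using IH False by auto
  have "(-1 :: rat) ^ T = - ((-1) ^ (T - 1))"
    using assms by (cases T) simp_all
  then have "(-1)^T * (- of_nat L * c) = of_nat L * ((-1)^(T - 1) * c)"
    by (simp add: algebra_simps)
  moreover have "0 < L"
    using False by (simp add: L_def)
  ultimately have sign: "0 < (-1)^T * (- of_nat L * c)"
    using c(1) by simp
  have "congJ g (- of_nat L * E g (T - 1) (n - 1)) (- of_nat L * (cst (of_rat c) * gamma ^ (g - 1)))"
    using c(2) by (rule congJ_mult)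
  moreover have "- of_nat L * (cst (of_rat c) * gamma ^ (g - 1)) = cst (of_rat (- of_nat L * c)) * gamma ^ (g - 1)"
    by (simp add: of_rat_minus of_rat_mult cst_mult cst_uminus cst_of_nat)
  ultimately have cong: "congJ g (- (of_nat L * E g (T - 1) (n - 1))) (cst (of_rat (- of_nat L * c)) * gamma ^ (g - 1))"
    by (simp only: mult_minus_left)
  show thesis
  proof (rule that[of "- of_nat L * c"])
    show "0 \<le> (-1)^T * (- of_nat L * c)"
      using sign by simp
    show "0 < (-1)^T * (- of_nat L * c)"
      by (rule sign)
    show "congJ g (- (of_nat (2 * (n + 1) * n) * E g (T - 1) (n - 1)))
        (cst (of_rat (- of_nat L * c)) * gamma ^ (g - 1))"
      unfolding L_def[symmetric] by (rule cong)
  qed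
qed

lemma E_congruent:
  assumes "T \<le> g - 1" "n \<le> T" "even (T + n)"
  shows "\<exists>c. 0 < (-1)^T * c \<and> congJ g (E g T n) (cst (of_rat c) * gamma ^ (g - 1))"
  using assms
proof (induction "3 * T + 1 - n" arbitrary: T n rule: less_induct)
  case less
  show ?case
  proof (cases "T = 0")
    case True
    then have "E g T n = cst (of_rat 1) * gamma ^ (g - 1)"
      using less.prems by (simp add: E_def weight_def)
    then show ?thesis
      using True by (intro exI[of _ 1]) (simp add: congJ_iff)
  next
    case False
    define K where "K = (n + 1)^2"
    have IH_head: "\<exists>c. 0 < (-1)^T * c \<and> congJ g (E g T (n + 2)) (cst (of_rat c) * gamma ^ (g - 1))"
      if "n + 2 \<le> T"
      using less.prems that by (intro less.hyps) auto
    have IH_tail: "\<exists>c. 0 < (-1)^(T - 1) * c \<and> congJ g (E g (T - 1) (n - 1)) (cst (of_rat c) * gamma ^ (g - 1))"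
      if "1 \<le> n"
      using less.prems that False by (intro less.hyps) auto
    obtain c where c: "0 \<le> (-1)^T * c" "n + 2 \<le> T \<Longrightarrow> even n \<Longrightarrow> 0 < (-1)^T * c"
      "congJ g (E_head g T n) (cst (of_rat c) * gamma ^ (g - 1))"
      using E_head_congruent[OF less.prems(1,2) IH_head] by blast
    obtain d where d: "0 \<le> (-1)^T * d" "1 \<le> n \<Longrightarrow> 0 < (-1)^T * d"
      "congJ g (- (of_nat (2 * (n + 1) * n) * E g (T - 1) (n - 1))) (cst (of_rat d) * gamma ^ (g - 1))"
      using E_tail_congruent[of T n g] IH_tail False by auto
    have rec: "of_nat K * E g T n
        = E_head g T n + - (of_nat (2 * (n + 1) * n) * E g (T - 1) (n - 1)) - alpha * E g T (n + 1)"
      using E_recurrence[of T g n] less.prems False by (simp add: K_def)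
    have "congJ g (alpha * E g T (n + 1)) 0"
      using less.prems alpha_E_in_J[of T g "n + 1"] by (simp add: congJ_iff)
    from congJ_diff[OF congJ_add[OF c(3) d(3)] this]
    have "congJ g (of_nat K * E g T n)
        (cst (of_rat c) * gamma ^ (g - 1) + cst (of_rat d) * gamma ^ (g - 1) - 0)"
      unfolding rec .
    also have "\<dots> = of_nat K * (cst (of_rat ((c + d) / of_nat K)) * gamma ^ (g - 1))"
    proof -
      have "of_nat K * cst (of_rat ((c + d) / of_nat K)) = cst (of_rat c) + cst (of_rat d)"
        using cst_of_rat_divide[of K "c + d"] by (simp add: K_def of_rat_add cst_add del: of_nat_power)
      then show ?thesis
        unfolding mult.assoc[symmetric] by (simp add: distrib_right)
    qed
    finally have "congJ g (E g T n) (cst (of_rat ((c + d) / of_nat K)) * gamma ^ (g - 1))"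
      by (rule congJ_cancel) (simp add: K_def)
    moreover have "0 < (-1)^T * ((c + d) / of_nat K)"
    proof -
      text \<open>For \<open>n = 0\<close> parity forces \<open>T \<ge> 2\<close>, so the head term is strictly signed.\<close>
      have "0 < (-1)^T * c \<or> 0 < (-1)^T * d"
        using c(2) d(2) less.prems False by (cases "n = 0") auto
      then have "0 < (-1)^T * (c + d)"
        using c(1) d(1) by (auto simp: distrib_left)
      then show ?thesis
        by (simp add: K_def)
    qed
    ultimately show ?thesis
      by blast
  qed
qed

theorem lemma4p2:
  fixes g j :: nat
  assumes "odd g" and "g > 0" and "j \<le> (g - 1) div 2"
  shows "\<exists>c::rat. c > 0 \<and>
    congJ g (beta_minus ^ (j + (g - 1) div 2) * beta_plus ^ (g - 1) * zeta (g - 2 * j - 1))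
            (cst (of_rat c) * gamma ^ (g - 1))"
proof -
  define h where "h = (g - 1) div 2"
  define n where "n = g - 2 * j - 1"
  have g: "g - 1 = 2 * h"
    using assms(1) by (auto simp: h_def elim: oddE)
  have n: "n = 2 * (h - j)"
    using assms(3) g by (simp add: n_def h_def)
  obtain c where c: "0 < c" "congJ g (E g (g - 1) n) (cst (of_rat c) * gamma ^ (g - 1))"
    using E_congruent[of "g - 1" g n] assms(1) g n by auto
  have "n div 2 = h - j" "(n + 1) div 2 = h - j"
    using n by simp_all
  then have "weight (g - 1) n = beta_minus ^ (h + j) * beta_plus ^ (h + j)"
    using assms(3) g by (simp add: weight_def h_def[symmetric])
  moreover have "j + (g - 1) div 2 = h + j" "g - 1 = (h - j) + (h + j)"
    using assms(3) g by (simp_all add: h_def)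
  ultimately have "beta_minus ^ (j + (g - 1) div 2) * beta_plus ^ (g - 1) * zeta (g - 2 * j - 1)
      = beta_plus ^ (h - j) * E g (g - 1) n"
    unfolding E_def n_def[symmetric] by (simp add: power_add algebra_simps)
  moreover have "cst (of_rat (16 ^ (h - j) * c)) = cst (16 ^ (h - j) * of_rat c)"
    by (simp add: of_rat_mult of_rat_power)
  ultimately show ?thesis
    using congJ_gamma_beta_plus_power[OF c(2), of "h - j"] c(1)
    by (intro exI[of _ "16 ^ (h - j) * c"]) simp
qed

end
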